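(* Let $w_0\to w_1\to\dots\to w_t$ be a reduced computation (as defined in the context) with $w_0$ and $w_t$ both equal to the empty word. Then $t=0$.
   Context: Let $\mathcal{A}$ be a finite non-empty alphabet, $\mathcal{A}_1=\{a_1:a\in\mathcal{A}\}$ a disjoint copy of $\mathcal{A}$, and $\mathcal{B}=\{b_1,b_2\}$; let $F=F(\mathcal{A}_1\sqcup\mathcal{B})$ be the free group, whose elements are identified with reduced words. Let $D=4|\mathcal{A}|(|\mathcal{A}|+2)$, fix a bijection $\eta:(\mathcal{A}\sqcup\mathcal{B})\times\mathcal{A}\to\{1,\dots,D/4\}$, and for $y\in\mathcal{A}\sqcup\mathcal{B}$, $a\in\mathcal{A}$, with $k=\eta(y,a)$, put $v(y,a)=b_1^k(b_2b_1)^{D-2k}b_2^k$. For $y\in\mathcal{A}\sqcup\mathcal{B}$ let $\psi_y$ be the automorphism of $F$ fixing $b_1,b_2$ and sending $a_1\mapsto v(y,a)a_1$ for each $a\in\mathcal{A}$; let $u_y=b_i^{-1}$ if $y=b_i$ and $u_y=a_1^{-1}$ if $y=a\in\mathcal{A}$. Rules: $w\cdot\theta_y=\psi_y(w)u_y$ and $w\cdot\theta_y^{-1}=\psi_y^{-1}(wu_y^{-1})$ (freely reduced). A computation is a sequence $w_0,\dots,w_t\in F$ with $w_i=w_{i-1}\cdot\theta_{y_i}^{\varepsilon_i}$, $y_i\in\mathcal{A}\sqcup\mathcal{B}$, $\varepsilon_i\in\{\pm1\}$; its history is $\theta_{y_1}^{\varepsilon_1}\cdots\theta_{y_t}^{\varepsilon_t}$,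 and it is reduced if the history is a freely reduced word. *)

theory Defs
  imports Main
begin

text \<open>Generators of F: the copy a_1 of each a in the alphabet 'a, and b_1, b_2.
  The same datatype also indexes the set A \<union> B of rule labels y (Ag a stands for a).\<close>
datatype 'a gen = Ag 'a | B1 | B2

text \<open>A letter is a generator with a sign (True = positive, False = inverse);
  elements of the free group are reduced words.\<close>
type_synonym 'a letter = "'a gen \<times> bool"
type_synonym 'a word = "'a letter list"

fun red :: "'a word \<Rightarrow> 'a word" where
  "red [] = []"
| "red (x # xs) = (case red xs of
      [] \<Rightarrow> [x]
    | y # ys \<Rightarrow> (if fst x = fst y \<and> snd x \<noteq> snd y then ys else x # y # ys))"

definition reduced_word :: "('b \<times> bool) list \<Rightarrow> bool" where
  "reduced_word xs \<longleftrightarrow>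
     (\<forall>i. Suc i < length xs \<longrightarrow> \<not> (fst (xs ! i) = fst (xs ! Suc i) \<and> snd (xs ! i) \<noteq> snd (xs ! Suc i)))"

definition winv :: "'a word \<Rightarrow> 'a word" where
  "winv w = rev (map (\<lambda>(g, s). (g, \<not> s)) w)"

definition Dconst :: "'a itself \<Rightarrow> nat" where
  "Dconst (_ :: 'a itself) = 4 * card (UNIV :: 'a set) * (card (UNIV :: 'a set) + 2)"

definition vword :: "('a gen \<times> 'a \<Rightarrow> nat) \<Rightarrow> 'a gen \<Rightarrow> 'a \<Rightarrow> 'a word" where
  "vword eta y a = (let k = eta (y, a) in
     replicate k (B1, True) @ concat (replicate (Dconst TYPE('a) - 2 * k) [(B2, True), (B1, True)])
     @ replicate k (B2, True))"

definition hom_ext :: "('a gen \<Rightarrow> 'a word) \<Rightarrow> 'a word \<Rightarrow> 'a word" where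
  "hom_ext f w = red (concat (map (\<lambda>(g, s). if s then f g else winv (f g)) w))"

definition psi :: "('a gen \<times> 'a \<Rightarrow> nat) \<Rightarrow> 'a gen \<Rightarrow> 'a word \<Rightarrow> 'a word" where
  "psi eta y = hom_ext (\<lambda>g. case g of Ag a \<Rightarrow> vword eta y a @ [(Ag a, True)] | _ \<Rightarrow> [(g, True)])"

definition psi_inv :: "('a gen \<times> 'a \<Rightarrow> nat) \<Rightarrow> 'a gen \<Rightarrow> 'a word \<Rightarrow> 'a word" where
  "psi_inv eta y = hom_ext (\<lambda>g. case g of Ag a \<Rightarrow> winv (vword eta y a) @ [(Ag a, True)] | _ \<Rightarrow> [(g, True)])"

definition uword :: "'a gen \<Rightarrow> 'a word" where
  "uword y = [(y, False)]"

text \<open>Application of the rule theta_y^eps (eps = True means +1).\<close>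
definition step :: "('a gen \<times> 'a \<Rightarrow> nat) \<Rightarrow> 'a gen \<times> bool \<Rightarrow> 'a word \<Rightarrow> 'a word" where
  "step eta r w = (case r of (y, e) \<Rightarrow>
     if e then red (psi eta y w @ uword y)
     else psi_inv eta y (red (w @ winv (uword y))))"

end

(* Each rule theta_y^(+-1) multiplies by a generator and applies psi_y^(+-1), i.e. substitutes
   a_1 -> v a_1 for a word v in b_1, b_2 of constant sign. Such a substitution never cancels an
   a-letter of a reduced word. Hence if the last a-letter of the history is theta_a^e, followed
   by the b-letters sigma, the current word is P a_1^(-e) G. Here the gap G is sigma', the
   letters of sigma each inverted, for e = -1, and red (V(sigma)^-1 sigma') for e = +1, with
   V(sigma) the product of the v(y,a)^(+-1) along sigma. The words v(y,a) are built so that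
   neighbouring factors of V(sigma) cancel in at most min (eta(b_1,a), eta(b_2,a)) letters;
   thus red V(sigma) is longer than sigma, and G is nonempty unless sigma is. As the history is
   reduced, the next a-letter cannot cancel a_1^(-e) either. So the word stays nonempty once an
   a-letter has occurred; before that it is sigma' for the whole history sigma. *)

theory Submission
  imports Defs
begin

section \<open>Free reduction\<close>

definition inv_letter :: "'b \<times> bool \<Rightarrow> 'b \<times> bool" where
  "inv_letter x = (fst x, \<not> snd x)"

lemma inv_letter_Pair [simp]: "inv_letter (g, s) = (g, \<not> s)"
  by (simp add: inv_letter_def)

lemma inv_letter_inv_letter [simp]: "inv_letter (inv_letter x) = x"
  by (simp add: inv_letter_def)

lemma fst_inv_letter [simp]: "fst (inv_letter x) = fst x"
  by (simp add: inv_letter_def)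

lemma inv_letter_eq_iff: "inv_letter x = y \<longleftrightarrow> fst x = fst y \<and> snd x \<noteq> snd y"
  by (cases x; cases y) auto

lemma reduced_word_Nil [simp]: "reduced_word []"
  and reduced_word_singleton [simp]: "reduced_word [x]"
  by (simp_all add: reduced_word_def)

lemma reduced_word_Cons_Cons [simp]:
  "reduced_word (x # y # ys) \<longleftrightarrow> inv_letter x \<noteq> y \<and> reduced_word (y # ys)"
  by (auto simp: reduced_word_def inv_letter_eq_iff nth_Cons split: nat.splits)

lemma reduced_word_Cons:
  "reduced_word (x # xs) \<longleftrightarrow> reduced_word xs \<and> (xs \<noteq> [] \<longrightarrow> inv_letter x \<noteq> hd xs)"
  by (cases xs) auto

lemma reduced_word_append:
  "reduced_word (xs @ ys) \<longleftrightarrow> reduced_word xs \<and> reduced_word ys \<and>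
     (xs \<noteq> [] \<and> ys \<noteq> [] \<longrightarrow> inv_letter (last xs) \<noteq> hd ys)"
  by (induction xs) (auto simp: reduced_word_Cons)

lemma reduced_word_appendD:
  "reduced_word (xs @ ys) \<Longrightarrow> reduced_word xs"
  "reduced_word (xs @ ys) \<Longrightarrow> reduced_word ys"
  by (simp_all add: reduced_word_append)

lemma reduced_word_infix: "reduced_word (xs @ ys @ zs) \<Longrightarrow> reduced_word ys"
  by (simp add: reduced_word_append)

lemma reduced_word_take: "reduced_word xs \<Longrightarrow> reduced_word (take n xs)"
  and reduced_word_drop: "reduced_word xs \<Longrightarrow> reduced_word (drop n xs)"
  using reduced_word_appendD[of "take n xs" "drop n xs"] by simp_all

lemma reduced_word_map_inv_letter: "reduced_word (map inv_letter xs) \<longleftrightarrow> reduced_word xs"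
  by (induction xs rule: induct_list012) (auto simp: inv_letter_eq_iff)

lemma reduced_word_const_sign: "\<forall>l\<in>set xs. snd l = b \<Longrightarrow> reduced_word xs"
  by (induction xs rule: induct_list012) (auto simp: inv_letter_eq_iff)

lemma reduced_word_glue:
  "reduced_word (xs @ ys) \<Longrightarrow> reduced_word (ys @ zs) \<Longrightarrow> ys \<noteq> [] \<Longrightarrow> reduced_word (xs @ ys @ zs)"
  by (auto simp: reduced_word_append)

definition cancel_cons :: "'b \<times> bool \<Rightarrow> ('b \<times> bool) list \<Rightarrow> ('b \<times> bool) list" where
  "cancel_cons x zs = (case zs of [] \<Rightarrow> [x] | y # ys \<Rightarrow> if inv_letter x = y then ys else x # y # ys)"

lemma red_Cons: "red (x # xs) = cancel_cons x (red xs)"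
  by (simp add: cancel_cons_def inv_letter_eq_iff split: list.split)

declare red.simps(2) [simp del]

lemma reduced_word_cancel_cons: "reduced_word zs \<Longrightarrow> reduced_word (cancel_cons x zs)"
  by (cases zs) (auto simp: cancel_cons_def reduced_word_Cons)

lemma reduced_word_red: "reduced_word (red xs)"
  by (induction xs) (simp_all add: red_Cons reduced_word_cancel_cons)

lemma red_reduced: "reduced_word xs \<Longrightarrow> red xs = xs"
proof (induction xs)
  case (Cons x xs)
  then show ?case
    by (cases xs) (simp_all add: red_Cons cancel_cons_def reduced_word_Cons)
qed simp

lemma red_red [simp]: "red (red xs) = red xs"
  by (simp add: red_reduced reduced_word_red)

lemma cancel_cons_inv_letter:
  "reduced_word zs \<Longrightarrow> cancel_cons x (cancel_cons (inv_letter x) zs) = zs"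
  by (cases zs rule: remdups_adj.cases) (auto simp: cancel_cons_def)

lemma red_append_red_right: "red (xs @ red ys) = red (xs @ ys)"
  by (induction xs) (simp_all add: red_Cons)

lemma red_cancel_cons_append:
  "reduced_word zs \<Longrightarrow> red (cancel_cons x zs @ ys) = cancel_cons x (red (zs @ ys))"
proof (cases zs)
  case (Cons y ys')
  moreover have "cancel_cons x (cancel_cons (inv_letter x) (red (ys' @ ys))) = red (ys' @ ys)"
    by (simp add: cancel_cons_inv_letter reduced_word_red)
  ultimately show ?thesis
    by (auto simp: cancel_cons_def red_Cons)
qed (simp add: cancel_cons_def red_Cons)

lemma red_append_red_left: "red (red xs @ ys) = red (xs @ ys)"
  by (induction xs) (simp_all add: red_Cons red_cancel_cons_append reduced_word_red)

lemma red_append_red_middle: "red (xs @ red ys @ zs) = red (xs @ ys @ zs)"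
  by (metis red_append_red_left red_append_red_right)

lemma winv_eq: "winv w = rev (map inv_letter w)"
  by (simp add: winv_def inv_letter_def case_prod_beta)

lemma winv_Nil [simp]: "winv [] = []"
  and winv_Cons [simp]: "winv (x # xs) = winv xs @ [inv_letter x]"
  and winv_append [simp]: "winv (xs @ ys) = winv ys @ winv xs"
  and winv_winv [simp]: "winv (winv xs) = xs"
  and length_winv [simp]: "length (winv xs) = length xs"
  and winv_replicate: "winv (replicate k x) = replicate k (inv_letter x)"
  by (simp_all add: winv_eq rev_map[symmetric] comp_def)

lemma red_append_winv: "red (zs @ winv zs @ ys) = red ys"
proof (induction zs arbitrary: ys)
  case (Cons z zs)
  have "red ((z # zs) @ winv (z # zs) @ ys) = cancel_cons z (red (zs @ winv zs @ inv_letter z # ys))"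
    by (simp add: red_Cons)
  also have "\<dots> = cancel_cons z (cancel_cons (inv_letter z) (red ys))"
    by (simp add: Cons red_Cons)
  also have "\<dots> = red ys"
    by (simp add: cancel_cons_inv_letter reduced_word_red)
  finally show ?case .
qed simp

lemma red_append_winv_middle: "red (xs @ zs @ winv zs @ ys) = red (xs @ ys)"
  by (metis red_append_red_right red_append_winv)

lemma set_red: "set (red xs) \<subseteq> set xs"
proof (induction xs)
  case (Cons x xs)
  then show ?case
    by (auto simp: red_Cons cancel_cons_def split: list.splits if_splits)
qed simp

lemma red_conj_Nil: "red (winv u @ g @ u) = [] \<Longrightarrow> red g = []"
  by (metis append.assoc append_Nil2 red_append_red_middle red_append_winv)

definition b_letter :: "'a letter \<Rightarrow> bool" where
  "b_letter l \<longleftrightarrow> fst l = B1 \<or> fst l = B2"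

definition b_word :: "'a word \<Rightarrow> bool" where
  "b_word xs \<longleftrightarrow> (\<forall>l\<in>set xs. b_letter l)"

lemma b_word_Nil [simp]: "b_word []"
  and b_word_Cons [simp]: "b_word (x # xs) \<longleftrightarrow> b_letter x \<and> b_word xs"
  and b_word_append [simp]: "b_word (xs @ ys) \<longleftrightarrow> b_word xs \<and> b_word ys"
  by (auto simp: b_word_def)

lemma not_b_letter_Ag [simp]: "\<not> b_letter (Ag a, s)"
  by (simp add: b_letter_def)

lemma b_letter_inv_letter [simp]: "b_letter (inv_letter x) \<longleftrightarrow> b_letter x"
  by (simp add: b_letter_def)

lemma b_letter_cases:
  assumes "b_letter x"
  obtains s where "x = (B1, s)" | s where "x = (B2, s)"
  using assms by (cases x) (auto simp: b_letter_def)

lemma not_b_letter_cases: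
  assumes "\<not> b_letter x"
  obtains a s where "x = (Ag a, s)"
  using assms by (cases x rule: prod.exhaust, rename_tac g s, case_tac g) (auto simp: b_letter_def)

lemma b_word_last: "b_word xs \<Longrightarrow> xs \<noteq> [] \<Longrightarrow> b_letter (last xs)"
  by (simp add: b_word_def)

lemma b_word_red: "b_word xs \<Longrightarrow> b_word (red xs)"
  using set_red by (fastforce simp: b_word_def)

lemma b_word_winv [simp]: "b_word (winv xs) \<longleftrightarrow> b_word xs"
  and b_word_map_inv_letter [simp]: "b_word (map inv_letter xs) \<longleftrightarrow> b_word xs"
  by (auto simp: b_word_def winv_eq)

lemma reduced_word_append_b_word:
  assumes "reduced_word (Q @ [(Ag a, s)])" "b_word G" "reduced_word G"
  shows "reduced_word (Q @ (Ag a, s) # G)"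
  using assms by (cases G) (auto simp: reduced_word_append b_letter_def inv_letter_eq_iff)

lemma reduced_word_b_word_snoc:
  assumes "reduced_word (Q @ G)" "b_word G" "G \<noteq> [] \<or> Q = []"
  shows "reduced_word (Q @ G @ [(Ag a, s)])"
  using assms b_word_last[of G]
  by (cases "G = []") (auto simp: reduced_word_append b_letter_def inv_letter_eq_iff)

lemma reduced_word_Ag_b_word_Ag:
  assumes "reduced_word (Q @ [(Ag a0, s0)])" "b_word G" "reduced_word G"
    and "G = [] \<Longrightarrow> inv_letter (Ag a0, s0) \<noteq> (Ag a, s)"
  shows "reduced_word (Q @ (Ag a0, s0) # G @ [(Ag a, s)])"
proof (cases "G = []")
  case False
  then show ?thesis
    using assms reduced_word_b_word_snoc[of "Q @ [(Ag a0, s0)]" G a s]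
    by (simp add: reduced_word_append_b_word)
qed (use assms in \<open>simp add: reduced_word_append\<close>)

lemma red_append_b_word:
  assumes "reduced_word (Q @ [(Ag a, s)])" "b_word G"
  shows "red (Q @ (Ag a, s) # G) = Q @ (Ag a, s) # red G"
proof -
  have "reduced_word (Q @ (Ag a, s) # red G)"
    using assms by (simp add: reduced_word_append_b_word b_word_red reduced_word_red)
  then show ?thesis
    using red_append_red_right[of "Q @ [(Ag a, s)]" G] by (simp add: red_reduced)
qed

lemma red_b_word_a_letter_b_word:
  assumes "b_word X" "b_word Y"
  shows "red (X @ (Ag a, s) # Y) = red X @ (Ag a, s) # red Y"
proof -
  have "reduced_word (red X @ [(Ag a, s)])"
    using reduced_word_b_word_snoc[of "[]" "red X"] assms by (simp add: reduced_word_red b_word_red)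
  then show ?thesis
    using assms red_append_red_left[of X "(Ag a, s) # Y"] by (simp add: red_append_b_word)
qed

lemma split_last_a_letter:
  "\<not> b_word P \<Longrightarrow> \<exists>P0 a s g. P = P0 @ (Ag a, s) # g \<and> b_word g"
proof (induction P rule: rev_induct)
  case (snoc x P)
  show ?case
  proof (cases "b_letter x")
    case True
    with snoc obtain P0 a s g where "P = P0 @ (Ag a, s) # g" "b_word g"
      by auto
    with True show ?thesis
      by (intro exI[of _ P0] exI[of _ a] exI[of _ s] exI[of _ "g @ [x]"]) simp
  next
    case False
    then obtain a s where "x = (Ag a, s)"
      by (cases rule: not_b_letter_cases)
    then show ?thesis
      by (intro exI[of _ P] exI[of _ a] exI[of _ s] exI[of _ "[]"]) simp
  qed
qed simp

section \<open>The words \<open>v(y,a)\<close>\<close>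

definition zigzag :: "'b \<times> bool \<Rightarrow> 'b \<times> bool \<Rightarrow> nat \<Rightarrow> nat \<Rightarrow> ('b \<times> bool) list" where
  "zigzag x y n k = replicate k x @ concat (replicate n [y, x]) @ replicate k y"

lemma vword_eq_zigzag:
  fixes eta :: "'a gen \<times> 'a \<Rightarrow> nat"
  shows "vword eta y a = zigzag (B1, True) (B2, True) (Dconst TYPE('a) - 2 * eta (y, a)) (eta (y, a))"
  by (simp add: vword_def zigzag_def Let_def)

lemma concat_replicate_append_commute: "concat (replicate n xs) @ xs = xs @ concat (replicate n xs)"
  by (induction n) simp_all

lemma last_concat_replicate: "n \<noteq> 0 \<Longrightarrow> xs \<noteq> [] \<Longrightarrow> last (concat (replicate n xs)) = last xs"
  by (cases n) (simp_all add: concat_replicate_append_commute[symmetric])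

lemma winv_zigzag: "winv (zigzag x y n k) = zigzag (inv_letter y) (inv_letter x) n k"
proof -
  have "winv (concat (replicate n [y, x])) = concat (replicate n [inv_letter x, inv_letter y])"
    by (induction n) (simp_all add: concat_replicate_append_commute)
  then show ?thesis
    by (simp add: zigzag_def winv_replicate)
qed

lemma set_zigzag: "set (zigzag x y n k) \<subseteq> {x, y}"
proof -
  have "set (concat (replicate n [y, x])) \<subseteq> {x, y}"
    by (induction n) auto
  then show ?thesis
    by (auto simp: zigzag_def)
qed

lemma length_zigzag: "length (zigzag x y n k) = 2 * k + 2 * n"
proof -
  have "length (concat (replicate n [y, x])) = 2 * n"
    by (induction n) simp_all
  then show ?thesis
    by (simp add: zigzag_def)
qed

lemma zigzag_junction:
  assumes "fst x \<noteq> fst y" "k \<noteq> k'" "n \<noteq> 0" "n' \<noteq> 0"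
  shows "\<exists>Y Z V. zigzag x y n k = Y @ Z \<and> zigzag (inv_letter y) (inv_letter x) n' k' = winv Z @ V
    \<and> length Z = min k k' \<and> Y \<noteq> [] \<and> V \<noteq> [] \<and> inv_letter (last Y) \<noteq> hd V"
proof (cases "k < k'")
  case True
  let ?Y = "replicate k x @ concat (replicate n [y, x])"
  let ?V = "replicate (k' - k) (inv_letter y) @ concat (replicate n' [inv_letter x, inv_letter y]) @
    replicate k' (inv_letter x)"
  have "zigzag (inv_letter y) (inv_letter x) n' k' = winv (replicate k y) @ ?V"
    using True by (simp add: zigzag_def winv_replicate replicate_add[symmetric])
  moreover have "last ?Y = x"
    using \<open>n \<noteq> 0\<close> last_concat_replicate[of n "[y, x]"] by (cases n) simp_all
  ultimately show ?thesis
    using True assms by (intro exI[of _ ?Y] exI[of _ "replicate k y"] exI[of _ ?V])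
      (auto simp: zigzag_def inv_letter_eq_iff)
next
  case False
  then have "k' < k"
    using \<open>k \<noteq> k'\<close> by simp
  let ?Y = "replicate k x @ concat (replicate n [y, x]) @ replicate (k - k') y"
  let ?V = "concat (replicate n' [inv_letter x, inv_letter y]) @ replicate k' (inv_letter x)"
  have "zigzag x y n k = ?Y @ replicate k' y"
    using \<open>k' < k\<close> by (simp add: zigzag_def replicate_add[symmetric])
  moreover have "?V \<noteq> [] \<and> hd ?V = inv_letter x"
    using \<open>n' \<noteq> 0\<close> by (cases n') simp_all
  ultimately show ?thesis
    using \<open>k' < k\<close> assms by (intro exI[of _ ?Y] exI[of _ "replicate k' y"] exI[of _ ?V])
      (auto simp: zigzag_def winv_replicate inv_letter_eq_iff)
qed

lemma b_word_vword: "b_word (vword eta y a)"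
proof -
  have "set (vword eta y a) \<subseteq> {(B1, True), (B2, True)}"
    by (simp add: vword_eq_zigzag set_zigzag)
  then show ?thesis
    by (auto simp: b_word_def b_letter_def)
qed

definition v_power :: "('a gen \<times> 'a \<Rightarrow> nat) \<Rightarrow> 'a \<Rightarrow> 'a letter \<Rightarrow> 'a word" where
  "v_power eta a s = (if snd s then vword eta (fst s) a else winv (vword eta (fst s) a))"

lemma v_power_True:
  fixes eta :: "'a gen \<times> 'a \<Rightarrow> nat"
  shows "v_power eta a (y, True) =
    zigzag (B1, True) (B2, True) (Dconst TYPE('a) - 2 * eta (y, a)) (eta (y, a))"
  by (simp add: v_power_def vword_eq_zigzag)

lemma v_power_False:
  fixes eta :: "'a gen \<times> 'a \<Rightarrow> nat"
  shows "v_power eta a (y, False) =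
    zigzag (B2, False) (B1, False) (Dconst TYPE('a) - 2 * eta (y, a)) (eta (y, a))"
  by (simp add: v_power_def vword_eq_zigzag winv_zigzag)

lemma b_word_v_power: "b_word (v_power eta a s)"
  by (simp add: v_power_def b_word_vword)

section \<open>The automorphisms \<open>\<psi>\<^sub>y\<close> as substitutions\<close>

definition a_subst :: "('a \<Rightarrow> 'a word) \<Rightarrow> 'a gen \<Rightarrow> 'a word" where
  "a_subst c g = (case g of Ag a \<Rightarrow> c a @ [(Ag a, True)] | _ \<Rightarrow> [(g, True)])"

lemma psi_eq_hom_ext_a_subst: "psi eta y = hom_ext (a_subst (vword eta y))"
  unfolding psi_def a_subst_def by (rule arg_cong[where f = hom_ext]) (auto split: gen.split)

lemma psi_inv_eq_hom_ext_a_subst: "psi_inv eta y = hom_ext (a_subst (\<lambda>a. winv (vword eta y a)))"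
  unfolding psi_inv_def a_subst_def by (rule arg_cong[where f = hom_ext]) (auto split: gen.split)

definition hom_concat :: "('a gen \<Rightarrow> 'a word) \<Rightarrow> 'a word \<Rightarrow> 'a word" where
  "hom_concat f w = concat (map (\<lambda>(g, s). if s then f g else winv (f g)) w)"

lemma hom_ext_eq_red_hom_concat: "hom_ext f w = red (hom_concat f w)"
  by (simp add: hom_ext_def hom_concat_def)

lemma hom_concat_Nil [simp]: "hom_concat f [] = []"
  and hom_concat_append [simp]: "hom_concat f (u @ v) = hom_concat f u @ hom_concat f v"
  by (simp_all add: hom_concat_def)

definition subst_prefix :: "('a \<Rightarrow> 'a word) \<Rightarrow> 'a \<Rightarrow> bool \<Rightarrow> 'a word" where
  "subst_prefix c a s = (if s then c a else [])"

definition subst_suffix :: "('a \<Rightarrow> 'a word) \<Rightarrow> 'a \<Rightarrow> bool \<Rightarrow> 'a word" where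
  "subst_suffix c a s = (if s then [] else winv (c a))"

lemma hom_concat_a_subst_Cons_Ag:
  "hom_concat (a_subst c) ((Ag a, s) # w) =
     subst_prefix c a s @ (Ag a, s) # subst_suffix c a s @ hom_concat (a_subst c) w"
  by (simp add: hom_concat_def a_subst_def subst_prefix_def subst_suffix_def)

lemma hom_concat_a_subst_b_word:
  assumes "b_word w"
  shows "hom_concat (a_subst c) w = w"
proof -
  have "(\<lambda>(g, s). if s then a_subst c g else winv (a_subst c g)) x = [x]" if "b_letter x" for x
    using that by (cases rule: b_letter_cases) (auto simp: a_subst_def)
  with assms show ?thesis
    by (induction w) (auto simp: hom_concat_def)
qed

lemma hom_ext_a_subst_b_word: "b_word w \<Longrightarrow> hom_ext (a_subst c) w = red w"
  by (simp add: hom_ext_eq_red_hom_concat hom_concat_a_subst_b_word)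

text \<open>Between two consecutive a-letters the substitution conjugates the b-word \<open>g\<close> by
  \<open>c a\<close> (or leaves it alone), so the letters can only meet if \<open>g\<close> was empty.\<close>

lemma a_letters_stay_apart:
  assumes "reduced_word ((Ag a0, s0) # g @ [(Ag a, s)])"
    and "red (subst_suffix c a0 s0 @ g @ subst_prefix c a s) = []"
  shows "inv_letter (Ag a0, s0) \<noteq> (Ag a, s)"
proof
  assume inv: "inv_letter (Ag a0, s0) = (Ag a, s)"
  then have "g \<noteq> []"
    using assms(1) by auto
  moreover have "reduced_word g"
    using assms(1) reduced_word_infix[of "[(Ag a0, s0)]" g "[(Ag a, s)]"] by simp
  moreover have "red g = []"
    using assms(2) inv red_conj_Nil[of "c a" g]
    by (cases s0) (auto simp: subst_prefix_def subst_suffix_def)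
  ultimately show False
    by (simp add: red_reduced)
qed

lemma hom_ext_a_subst_append_Ag:
  assumes "b_word g"
  shows "hom_ext (a_subst c) (P @ (Ag a, s) # g) =
    red (hom_ext (a_subst c) P @ subst_prefix c a s @ (Ag a, s) # subst_suffix c a s @ g)"
  using assms by (simp add: hom_ext_eq_red_hom_concat hom_concat_a_subst_Cons_Ag
      hom_concat_a_subst_b_word red_append_red_left)

lemma b_word_subst_prefix: "(\<And>a. b_word (c a)) \<Longrightarrow> b_word (subst_prefix c a s)"
  and b_word_subst_suffix: "(\<And>a. b_word (c a)) \<Longrightarrow> b_word (subst_suffix c a s)"
  by (simp_all add: subst_prefix_def subst_suffix_def)

lemma hom_ext_a_subst_b_word_Ag:
  assumes c: "\<And>a. b_word (c a)" and "b_word P" "b_word g"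
  shows "\<exists>P'. hom_ext (a_subst c) (P @ (Ag a, s) # g) = P' @ (Ag a, s) # red (subst_suffix c a s @ g)
    \<and> reduced_word (P' @ [(Ag a, s)])"
proof -
  have "reduced_word (red (P @ subst_prefix c a s) @ [(Ag a, s)])"
    using reduced_word_b_word_snoc[of "[]" "red (P @ subst_prefix c a s)"] assms
    by (simp add: reduced_word_red b_word_red b_word_subst_prefix)
  moreover have "hom_ext (a_subst c) (P @ (Ag a, s) # g) =
      red (P @ subst_prefix c a s) @ (Ag a, s) # red (subst_suffix c a s @ g)"
    using assms red_b_word_a_letter_b_word[of "P @ subst_prefix c a s"]
    by (simp add: hom_ext_a_subst_append_Ag hom_ext_a_subst_b_word red_append_red_left
        b_word_subst_prefix b_word_subst_suffix)
  ultimately show ?thesis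
    by blast
qed

lemma hom_ext_a_subst_keeps_last_a_letter:
  assumes c: "\<And>a. b_word (c a)"
  shows "reduced_word (P @ (Ag a, s) # g) \<Longrightarrow> b_word g \<Longrightarrow>
    \<exists>P'. hom_ext (a_subst c) (P @ (Ag a, s) # g) = P' @ (Ag a, s) # red (subst_suffix c a s @ g)
      \<and> reduced_word (P' @ [(Ag a, s)])"
proof (induction "length P" arbitrary: P a s g rule: less_induct)
  case less
  show ?case
  proof (cases "b_word P")
    case True
    then show ?thesis
      by (rule hom_ext_a_subst_b_word_Ag[of c, OF c _ less.prems(2)])
  next
    case False
    then obtain P0 a0 s0 g0 where P: "P = P0 @ (Ag a0, s0) # g0" and "b_word g0"
      using split_last_a_letter by fastforce
    moreover have "reduced_word (P0 @ (Ag a0, s0) # g0)"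
      using less.prems(1) P reduced_word_appendD(1)[of P] by simp
    ultimately obtain P0' where IH: "hom_ext (a_subst c) P =
        P0' @ (Ag a0, s0) # red (subst_suffix c a0 s0 @ g0)" and P0': "reduced_word (P0' @ [(Ag a0, s0)])"
      using less.hyps[of P0 a0 s0 g0] by auto
    define G0 where "G0 = red (subst_suffix c a0 s0 @ g0 @ subst_prefix c a s)"
    have "reduced_word ((Ag a0, s0) # g0 @ [(Ag a, s)])"
      using less.prems(1) P reduced_word_infix[of P0 "(Ag a0, s0) # g0 @ [(Ag a, s)]" g] by simp
    then have "reduced_word (P0' @ (Ag a0, s0) # G0 @ [(Ag a, s)])"
      using c \<open>b_word g0\<close>
      by (intro reduced_word_Ag_b_word_Ag[OF P0'] a_letters_stay_apart[of a0 s0 g0 a s c])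
        (simp_all add: G0_def b_word_red reduced_word_red b_word_subst_prefix b_word_subst_suffix)
    moreover have "hom_ext (a_subst c) (P @ (Ag a, s) # g) =
        red (P0' @ (Ag a0, s0) # G0 @ (Ag a, s) # subst_suffix c a s @ g)"
      using red_append_red_middle[of "P0' @ [(Ag a0, s0)]"] less.prems(2)
      by (simp add: hom_ext_a_subst_append_Ag IH G0_def)
    ultimately show ?thesis
      using red_append_b_word[of "P0' @ (Ag a0, s0) # G0" a s "subst_suffix c a s @ g"]
        c less.prems(2)
      by (auto simp: b_word_subst_suffix)
  qed
qed

text \<open>Only for a negative a-letter: before a positive one, the suffix \<open>(c a)\<^sup>-\<^sup>1\<close> produced
  by a preceding \<open>a\<^sub>1\<^sup>-\<^sup>1\<close> could absorb the b-word in between.\<close>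

lemma reduced_word_hom_ext_a_subst_snoc:
  assumes c: "\<And>a. b_word (c a)"
    and W: "reduced_word (W @ [(Ag a, False)])"
  shows "reduced_word (hom_ext (a_subst c) W @ [(Ag a, False)])"
proof (cases "b_word W")
  case True
  then show ?thesis
    using W by (simp add: hom_ext_a_subst_b_word red_reduced reduced_word_appendD(1)[OF W])
next
  case False
  then obtain P a0 s0 g where W_eq: "W = P @ (Ag a0, s0) # g" and g: "b_word g"
    using split_last_a_letter by fastforce
  then obtain P' where hom: "hom_ext (a_subst c) W = P' @ (Ag a0, s0) # red (subst_suffix c a0 s0 @ g)"
      and P': "reduced_word (P' @ [(Ag a0, s0)])"
    using hom_ext_a_subst_keeps_last_a_letter[of c, OF c] reduced_word_appendD(1)[OF W] by blast
  have "reduced_word (P' @ (Ag a0, s0) # red (subst_suffix c a0 s0 @ g) @ [(Ag a, False)])"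
  proof (rule reduced_word_Ag_b_word_Ag[OF P'])
    show "b_word (red (subst_suffix c a0 s0 @ g))"
      using c g by (simp add: subst_suffix_def b_word_red)
    show "reduced_word (red (subst_suffix c a0 s0 @ g))"
      by (rule reduced_word_red)
    assume G: "red (subst_suffix c a0 s0 @ g) = []"
    show "inv_letter (Ag a0, s0) \<noteq> (Ag a, False)"
    proof
      assume inv: "inv_letter (Ag a0, s0) = (Ag a, False)"
      then have "red g = []"
        using G by (simp add: subst_suffix_def)
      moreover have "reduced_word g"
        using reduced_word_appendD(1)[OF W] by (simp add: W_eq reduced_word_append reduced_word_Cons)
      ultimately have "g = []"
        by (simp add: red_reduced)
      then show False
        using W W_eq inv by (simp add: reduced_word_append)
    qed
  qed
  then show ?thesis
    by (simp add: hom)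
qed

section \<open>Cancellation in products of the words \<open>v(y,a)\<^sup>\<plusminus>\<^sup>1\<close>\<close>

locale block_family =
  fixes V :: "'a letter \<Rightarrow> 'a word" and M :: nat
  assumes block_reduced: "b_letter s \<Longrightarrow> reduced_word (V s)"
    and block_sign: "b_letter s \<Longrightarrow> \<forall>l\<in>set (V s). snd l = snd s"
    and block_length: "b_letter s \<Longrightarrow> 2 * M + 2 \<le> length (V s)"
    and block_junction: "b_letter s \<Longrightarrow> b_letter s' \<Longrightarrow> fst s \<noteq> fst s' \<Longrightarrow> snd s \<noteq> snd s' \<Longrightarrow>
      \<exists>Y Z V'. V s = Y @ Z \<and> V s' = winv Z @ V' \<and> length Z = M \<and> Y \<noteq> [] \<and> V' \<noteq> [] \<and>
        inv_letter (last Y) \<noteq> hd V'"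
begin

lemma red_append_block:
  assumes s: "b_letter s" "b_letter s'" "inv_letter s \<noteq> s'"
    and X: "c \<le> M" "reduced_word (X @ drop c (V s))"
  shows "\<exists>X' c'. c' \<le> M \<and> length X < length X' \<and> red (X @ drop c (V s) @ V s') = X' @ drop c' (V s')"
proof -
  have c_less: "c + M < length (V s)"
    using block_length[OF s(1)] X(1) by simp
  show ?thesis
  proof (cases "snd s = snd s'")
    case True
    then have "reduced_word (drop c (V s) @ V s')"
      using block_sign[OF s(1)] block_sign[OF s(2)]
      by (intro reduced_word_const_sign[where b = "snd s"]) (auto dest: in_set_dropD)
    then have "reduced_word (X @ drop c (V s) @ V s')"
      using X c_less by (intro reduced_word_glue) auto
    then show ?thesis
      using c_less by (intro exI[of _ "X @ drop c (V s)"] exI[of _ 0]) (simp add: red_reduced)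
  next
    case False
    then obtain Y Z V' where VZ: "V s = Y @ Z" "V s' = winv Z @ V'" "length Z = M"
        "Y \<noteq> []" "V' \<noteq> []" "inv_letter (last Y) \<noteq> hd V'"
      using block_junction[OF s(1,2)] s(3) by (auto simp: inv_letter_eq_iff)
    have c_Y: "c < length Y" and drop_V: "drop c (V s) = drop c Y @ Z"
      using c_less VZ by auto
    have "reduced_word (drop c Y @ V')"
      using block_reduced[OF s(1)] block_reduced[OF s(2)] VZ c_Y reduced_word_drop[of Y c]
      by (auto simp: reduced_word_append dest: reduced_word_appendD)
    moreover have "reduced_word (X @ drop c Y)"
      using X(2) drop_V reduced_word_appendD(1)[of "X @ drop c Y" Z] by simp
    ultimately have "reduced_word (X @ drop c Y @ V')"
      using c_Y by (intro reduced_word_glue) auto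
    moreover have "red (X @ drop c (V s) @ V s') = red (X @ drop c Y @ V')"
      using drop_V VZ red_append_winv_middle[of "X @ drop c Y" Z V'] by simp
    ultimately show ?thesis
      using c_Y VZ by (intro exI[of _ "X @ drop c Y"] exI[of _ M]) (simp add: red_reduced)
  qed
qed

text \<open>Only the last block can still lose letters, and at most \<open>M\<close> of them.\<close>

lemma red_concat_blocks:
  "\<sigma> \<noteq> [] \<Longrightarrow> b_word \<sigma> \<Longrightarrow> reduced_word \<sigma> \<Longrightarrow>
    \<exists>X c. c \<le> M \<and> length \<sigma> \<le> length X + 1 \<and> red (concat (map V \<sigma>)) = X @ drop c (V (last \<sigma>))"
proof (induction \<sigma> rule: rev_induct)
  case (snoc s' \<sigma>)
  show ?case
  proof (cases "\<sigma> = []")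
    case True
    with snoc.prems block_reduced[of s'] show ?thesis
      by (intro exI[of _ "[]"] exI[of _ 0]) (simp add: red_reduced)
  next
    case False
    obtain X c where "c \<le> M" "length \<sigma> \<le> length X + 1"
      and red_\<sigma>: "red (concat (map V \<sigma>)) = X @ drop c (V (last \<sigma>))"
      using snoc False reduced_word_appendD(1) by fastforce
    moreover have "b_letter (last \<sigma>)" "b_letter s'" "inv_letter (last \<sigma>) \<noteq> s'"
      using snoc.prems False b_word_last[of \<sigma>] by (auto simp: reduced_word_append)
    moreover have "reduced_word (X @ drop c (V (last \<sigma>)))"
      using red_\<sigma> reduced_word_red by metis
    ultimately obtain X' c' where "c' \<le> M" "length X < length X'"
        "red (X @ drop c (V (last \<sigma>)) @ V s') = X' @ drop c' (V s')"
      using red_append_block by blast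
    moreover have "red (concat (map V (\<sigma> @ [s']))) = red (X @ drop c (V (last \<sigma>)) @ V s')"
      using red_append_red_left[of "concat (map V \<sigma>)" "V s'"] by (simp add: red_\<sigma>)
    ultimately show ?thesis
      using \<open>length \<sigma> \<le> length X + 1\<close> by (intro exI[of _ X'] exI[of _ c']) simp
  qed
qed simp

lemma length_lt_red_concat:
  assumes "\<sigma> \<noteq> []" "b_word \<sigma>" "reduced_word \<sigma>"
  shows "length \<sigma> < length (red (concat (map V \<sigma>)))"
proof -
  obtain X c where "c \<le> M" "length \<sigma> \<le> length X + 1"
      "red (concat (map V \<sigma>)) = X @ drop c (V (last \<sigma>))"
    using red_concat_blocks[OF assms] by blast
  moreover have "2 * M + 2 \<le> length (V (last \<sigma>))"
    using block_length assms b_word_last by blast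
  ultimately show ?thesis
    by simp
qed

end

text \<open>The only properties of the bijection \<open>eta\<close> that the argument needs.\<close>

locale v_labelling =
  fixes eta :: "'a gen \<times> 'a \<Rightarrow> nat"
  assumes eta_B1_B2: "eta (B1, a) \<noteq> eta (B2, a)"
    and eta_less: "2 * eta (y, a) < Dconst TYPE('a)"
begin

lemma block_family_v_power: "block_family (v_power eta a) (min (eta (B1, a)) (eta (B2, a)))"
proof
  have n: "Dconst TYPE('a) - 2 * eta (y, a) \<noteq> 0" for y
    using eta_less[of y a] by simp
  fix s :: "'a letter"
  assume "b_letter s"
  then obtain y b where s: "s = (y, b)" and y: "y = B1 \<or> y = B2"
    by (cases rule: b_letter_cases) auto
  show sign: "\<forall>l\<in>set (v_power eta a s). snd l = snd s"
    using set_zigzag by (cases b) (fastforce simp: s v_power_True v_power_False)+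
  then show "reduced_word (v_power eta a s)"
    by (rule reduced_word_const_sign)
  show "2 * min (eta (B1, a)) (eta (B2, a)) + 2 \<le> length (v_power eta a s)"
    using y n[of y] by (cases b) (auto simp: s v_power_True v_power_False length_zigzag)
next
  fix s s' :: "'a letter"
  assume ss': "b_letter s" "b_letter s'" "fst s \<noteq> fst s'" "snd s \<noteq> snd s'"
  then obtain y b y' where s: "s = (y, b)" "s' = (y', \<not> b)"
    by (cases s; cases s') auto
  have "{y, y'} = {B1, B2}"
    using ss' by (auto simp: s b_letter_def)
  then have "min (eta (y, a)) (eta (y', a)) = min (eta (B1, a)) (eta (B2, a))"
    and k: "eta (y, a) \<noteq> eta (y', a)"
    using eta_B1_B2[of a] by (auto simp: doubleton_eq_iff min.commute)
  have n: "Dconst TYPE('a) - 2 * eta (y, a) \<noteq> 0" "Dconst TYPE('a) - 2 * eta (y', a) \<noteq> 0"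
    using eta_less[of y a] eta_less[of y' a] by simp_all
  then show "\<exists>Y Z V'. v_power eta a s = Y @ Z \<and> v_power eta a s' = winv Z @ V' \<and>
      length Z = min (eta (B1, a)) (eta (B2, a)) \<and> Y \<noteq> [] \<and> V' \<noteq> [] \<and> inv_letter (last Y) \<noteq> hd V'"
    using zigzag_junction[of "(B1, True)" "(B2, True)", OF _ k n]
      zigzag_junction[of "(B2, False)" "(B1, False)", OF _ k n] \<open>min _ _ = _\<close>
    by (cases b) (simp_all add: s v_power_True v_power_False)
qed

lemma length_lt_red_concat_v_power:
  "\<sigma> \<noteq> [] \<Longrightarrow> b_word \<sigma> \<Longrightarrow> reduced_word \<sigma> \<Longrightarrow>
    length \<sigma> < length (red (concat (map (v_power eta a) \<sigma>)))"
  by (rule block_family.length_lt_red_concat[OF block_family_v_power])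

end

lemma step_b_word:
  assumes "b_letter x" "b_word W"
  shows "step eta x W = red (W @ [inv_letter x])"
proof -
  obtain y e where x: "x = (y, e)"
    by fastforce
  then have "b_word [(y, b)]" for b
    using assms(1) by (simp add: b_letter_def)
  then show ?thesis
    using assms(2)
    by (simp add: x step_def uword_def psi_eq_hom_ext_a_subst psi_inv_eq_hom_ext_a_subst
        hom_ext_a_subst_b_word b_word_red red_append_red_left)
qed

lemma step_pos_b_letter:
  assumes y: "y = B1 \<or> y = B2" and P: "reduced_word (P @ [(Ag a, s)])"
    and G: "b_word G" "reduced_word G"
  shows "\<exists>P'. reduced_word (P' @ [(Ag a, s)]) \<and> step eta (y, True) (P @ (Ag a, s) # G) =
    P' @ (Ag a, s) # red (subst_suffix (vword eta y) a s @ G @ [(y, False)])"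
proof -
  let ?S = "subst_suffix (vword eta y) a s"
  obtain P' where hom: "psi eta y (P @ (Ag a, s) # G) = P' @ (Ag a, s) # red (?S @ G)"
    and P': "reduced_word (P' @ [(Ag a, s)])"
    using hom_ext_a_subst_keeps_last_a_letter[of "vword eta y", OF b_word_vword
        reduced_word_append_b_word[OF P G] G(1)]
    unfolding psi_eq_hom_ext_a_subst by blast
  have "step eta (y, True) (P @ (Ag a, s) # G) = red (P' @ (Ag a, s) # red (?S @ G) @ [(y, False)])"
    by (simp add: step_def uword_def hom)
  also have "\<dots> = P' @ (Ag a, s) # red (?S @ G @ [(y, False)])"
    using red_append_b_word[OF P', of "red (?S @ G) @ [(y, False)]"] G y
    by (simp add: b_word_red red_append_red_left b_word_subst_suffix b_word_vword b_letter_def)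
  finally show ?thesis
    using P' by blast
qed

lemma step_neg_b_letter:
  assumes y: "y = B1 \<or> y = B2" and P: "reduced_word (P @ [(Ag a, s)])"
    and G: "b_word G" "reduced_word G"
  shows "\<exists>P'. reduced_word (P' @ [(Ag a, s)]) \<and> step eta (y, False) (P @ (Ag a, s) # G) =
    P' @ (Ag a, s) # red (subst_suffix (\<lambda>b. winv (vword eta y b)) a s @ G @ [(y, True)])"
proof -
  let ?S = "subst_suffix (\<lambda>b. winv (vword eta y b)) a s"
  have G': "b_word (red (G @ [(y, True)]))" "reduced_word (red (G @ [(y, True)]))"
    using G y by (simp_all add: b_word_red reduced_word_red b_letter_def)
  obtain P' where hom: "psi_inv eta y (P @ (Ag a, s) # red (G @ [(y, True)])) =
      P' @ (Ag a, s) # red (?S @ red (G @ [(y, True)]))"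
    and P': "reduced_word (P' @ [(Ag a, s)])"
    using hom_ext_a_subst_keeps_last_a_letter[of "\<lambda>b. winv (vword eta y b)", OF _
        reduced_word_append_b_word[OF P G'] G'(1)]
    unfolding psi_inv_eq_hom_ext_a_subst by (auto simp: b_word_vword)
  have "step eta (y, False) (P @ (Ag a, s) # G) = psi_inv eta y (red (P @ (Ag a, s) # G @ [(y, True)]))"
    by (simp add: step_def uword_def)
  also have "\<dots> = P' @ (Ag a, s) # red (?S @ G @ [(y, True)])"
    using red_append_b_word[OF P, of "G @ [(y, True)]"] G y
    by (simp add: hom red_append_red_right b_letter_def)
  finally show ?thesis
    using P' by blast
qed

lemma step_b_letter:
  assumes x: "b_letter x" and P: "reduced_word (P @ [(Ag a, \<not> e)])" and G: "b_word G" "reduced_word G"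
  shows "\<exists>P'. reduced_word (P' @ [(Ag a, \<not> e)]) \<and> step eta x (P @ (Ag a, \<not> e) # G) =
    P' @ (Ag a, \<not> e) # red ((if e then winv (v_power eta a x) else []) @ G @ [inv_letter x])"
proof -
  obtain y e0 where x_eq: "x = (y, e0)"
    by fastforce
  show ?thesis
    using step_pos_b_letter[of y P a "\<not> e" G eta] step_neg_b_letter[of y P a "\<not> e" G eta] x P G
    by (cases e0; cases e) (simp_all add: x_eq subst_suffix_def v_power_def b_letter_def)
qed

lemma step_a_letter:
  assumes W: "reduced_word (W @ [(Ag a, \<not> e)])"
  shows "\<exists>P. reduced_word (P @ [(Ag a, \<not> e)]) \<and> step eta (Ag a, e) W = P @ [(Ag a, \<not> e)]"
proof (cases e)
  case True
  then have "reduced_word (psi eta (Ag a) W @ [(Ag a, \<not> e)])"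
    using W unfolding psi_eq_hom_ext_a_subst
    by (simp add: reduced_word_hom_ext_a_subst_snoc b_word_vword)
  then show ?thesis
    using True by (auto simp: step_def uword_def red_reduced)
next
  case False
  then obtain P where "psi_inv eta (Ag a) (W @ [(Ag a, True)]) = P @ [(Ag a, True)]"
      and "reduced_word (P @ [(Ag a, True)])"
    using hom_ext_a_subst_keeps_last_a_letter[of "\<lambda>b. winv (vword eta (Ag a) b)" W a True "[]"] W
    unfolding psi_inv_eq_hom_ext_a_subst by (auto simp: b_word_vword subst_suffix_def)
  then show ?thesis
    using False W by (auto simp: step_def uword_def red_reduced)
qed

section \<open>The shape of a computation\<close>

definition gap :: "('a gen \<times> 'a \<Rightarrow> nat) \<Rightarrow> 'a \<Rightarrow> bool \<Rightarrow> 'a word \<Rightarrow> 'a word" where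
  "gap eta a e \<sigma> = red ((if e then winv (concat (map (v_power eta a) \<sigma>)) else []) @ map inv_letter \<sigma>)"

lemma gap_Nil [simp]: "gap eta a e [] = []"
  by (simp add: gap_def)

lemma b_word_gap: "b_word \<sigma> \<Longrightarrow> b_word (gap eta a e \<sigma>)"
proof -
  have "b_word (concat (map (v_power eta a) \<sigma>))"
    by (induction \<sigma>) (simp_all add: b_word_v_power)
  then show "b_word \<sigma> \<Longrightarrow> b_word (gap eta a e \<sigma>)"
    by (simp add: gap_def b_word_red)
qed

lemma reduced_word_gap: "reduced_word (gap eta a e \<sigma>)"
  by (simp add: gap_def reduced_word_red)

lemma gap_snoc:
  "red ((if e then winv (v_power eta a x) else []) @ gap eta a e \<sigma> @ [inv_letter x]) =
    gap eta a e (\<sigma> @ [x])"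
  by (simp add: gap_def red_append_red_middle red_append_red_left)

definition fits_history :: "('a gen \<times> 'a \<Rightarrow> nat) \<Rightarrow> 'a word \<Rightarrow> 'a word \<Rightarrow> bool" where
  "fits_history eta H W \<longleftrightarrow>
     (b_word H \<and> W = map inv_letter H) \<or>
     (\<exists>H0 a e \<sigma> P. H = H0 @ (Ag a, e) # \<sigma> \<and> b_word \<sigma> \<and> reduced_word (P @ [(Ag a, \<not> e)]) \<and>
        W = P @ (Ag a, \<not> e) # gap eta a e \<sigma>)"

lemma fits_history_a_letterI:
  "b_word \<sigma> \<Longrightarrow> reduced_word (P @ [(Ag a, \<not> e)]) \<Longrightarrow>
    fits_history eta (H0 @ (Ag a, e) # \<sigma>) (P @ (Ag a, \<not> e) # gap eta a e \<sigma>)"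
  unfolding fits_history_def by blast

lemma fits_history_Nil: "fits_history eta H [] \<Longrightarrow> H = []"
  by (auto simp: fits_history_def)

context v_labelling
begin

lemma gap_eq_Nil_iff:
  assumes "b_word \<sigma>" "reduced_word \<sigma>"
  shows "gap eta a e \<sigma> = [] \<longleftrightarrow> \<sigma> = []"
proof
  assume gap: "gap eta a e \<sigma> = []"
  let ?C = "concat (map (v_power eta a) \<sigma>)"
  show "\<sigma> = []"
  proof (cases e)
    case True
    have "red ?C = red (?C @ red (winv ?C @ map inv_letter \<sigma>))"
      using gap True by (simp add: gap_def)
    also have "\<dots> = map inv_letter \<sigma>"
      using assms(2) by (simp add: red_append_red_right red_append_winv red_reduced
          reduced_word_map_inv_letter)
    finally have "length (red ?C) = length \<sigma>"
      by simp
    then show ?thesis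
      using length_lt_red_concat_v_power[OF _ assms, of a] by force
  next
    case False
    then show ?thesis
      using gap assms(2) by (simp add: gap_def red_reduced reduced_word_map_inv_letter)
  qed
qed simp

lemma fits_history_snoc_a_letter:
  assumes H: "reduced_word (H @ [(Ag a, e)])" and W: "fits_history eta H W"
  shows "reduced_word (W @ [(Ag a, \<not> e)])"
  using W[unfolded fits_history_def]
proof (elim disjE exE conjE)
  assume "b_word H" "W = map inv_letter H"
  then show ?thesis
    using reduced_word_b_word_snoc[of "[]" W] reduced_word_appendD(1)[OF H]
    by (simp add: reduced_word_map_inv_letter)
next
  fix H0 a0 e0 \<sigma> P
  assume H_eq: "H = H0 @ (Ag a0, e0) # \<sigma>" and \<sigma>: "b_word \<sigma>"
    and P: "reduced_word (P @ [(Ag a0, \<not> e0)])" and W_eq: "W = P @ (Ag a0, \<not> e0) # gap eta a0 e0 \<sigma>"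
  have "reduced_word (P @ (Ag a0, \<not> e0) # gap eta a0 e0 \<sigma> @ [(Ag a, \<not> e)])"
  proof (rule reduced_word_Ag_b_word_Ag[OF P b_word_gap[OF \<sigma>] reduced_word_gap])
    assume "gap eta a0 e0 \<sigma> = []"
    moreover have "reduced_word \<sigma>"
      using H H_eq reduced_word_infix[of "H0 @ [(Ag a0, e0)]" \<sigma> "[(Ag a, e)]"] by simp
    ultimately have "\<sigma> = []"
      using \<sigma> gap_eq_Nil_iff by blast
    then show "inv_letter (Ag a0, \<not> e0) \<noteq> (Ag a, \<not> e)"
      using H H_eq by (auto simp: reduced_word_append)
  qed
  then show ?thesis
    by (simp add: W_eq)
qed

lemma fits_history_snoc:
  assumes H: "reduced_word (H @ [x])" and W: "fits_history eta H W"
  shows "fits_history eta (H @ [x]) (step eta x W)"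
proof (cases "b_letter x")
  case True
  from W[unfolded fits_history_def] show ?thesis
  proof (elim disjE exE conjE)
    assume "b_word H" "W = map inv_letter H"
    moreover have "reduced_word (map inv_letter (H @ [x]))"
      using H reduced_word_map_inv_letter[of "H @ [x]"] by simp
    ultimately show ?thesis
      using True by (simp add: step_b_word red_reduced fits_history_def)
  next
    fix H0 a e \<sigma> P
    assume H_eq: "H = H0 @ (Ag a, e) # \<sigma>" and \<sigma>: "b_word \<sigma>"
      and P: "reduced_word (P @ [(Ag a, \<not> e)])" and W_eq: "W = P @ (Ag a, \<not> e) # gap eta a e \<sigma>"
    obtain P' where "reduced_word (P' @ [(Ag a, \<not> e)])"
        "step eta x W = P' @ (Ag a, \<not> e) # gap eta a e (\<sigma> @ [x])"
      using step_b_letter[where eta = eta, OF True P b_word_gap[OF \<sigma>, of eta a e] reduced_word_gap]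
      by (auto simp: W_eq gap_snoc)
    then show ?thesis
      using fits_history_a_letterI[of "\<sigma> @ [x]" P' a e eta H0] H_eq \<sigma> True by simp
  qed
next
  case False
  then obtain a e where x: "x = (Ag a, e)"
    by (cases rule: not_b_letter_cases)
  then obtain P where "reduced_word (P @ [(Ag a, \<not> e)])" "step eta x W = P @ [(Ag a, \<not> e)]"
    using step_a_letter[OF fits_history_snoc_a_letter[OF H[unfolded x] W]] by (auto simp: x)
  then show ?thesis
    using fits_history_a_letterI[of "[]" P a e eta H] x by simp
qed

lemma fits_history_computation:
  assumes "w 0 = []" "\<forall>i < length h. w (Suc i) = step eta (h ! i) (w i)" "reduced_word h"
    and "i \<le> length h"
  shows "fits_history eta (take i h) (w i)"
  using assms(4)
proof (induction i)
  case (Suc i)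
  then show ?case
    using fits_history_snoc[of "take i h" "h ! i"] reduced_word_take[OF assms(3), of "Suc i"] assms(2)
    by (simp add: take_Suc_conv_app_nth)
qed (simp add: assms(1) fits_history_def)

end

lemma v_labelling_of_bij:
  fixes eta :: "'a gen \<times> 'a \<Rightarrow> nat"
  assumes "bij_betw eta UNIV {1 .. Dconst TYPE('a) div 4}"
  shows "v_labelling eta"
proof
  show "eta (B1, a) \<noteq> eta (B2, a)" for a
    using bij_betw_imp_inj_on[OF assms] by (auto dest: injD)
  show "2 * eta (y, a) < Dconst TYPE('a)" for y a
  proof -
    have "eta (y, a) \<in> {1 .. Dconst TYPE('a) div 4}"
      using bij_betwE[OF assms] by blast
    then show ?thesis
      by simp presburger
  qed
qed

theorem lemma5p13:
  fixes eta :: "'a::finite gen \<times> 'a \<Rightarrow> nat"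
    and h :: "('a gen \<times> bool) list"
    and w :: "nat \<Rightarrow> 'a word"
  assumes "bij_betw eta UNIV {1 .. Dconst TYPE('a) div 4}"
    and "w 0 = []"
    and "\<forall>i < length h. w (Suc i) = step eta (h ! i) (w i)"
    and "w (length h) = []"
    and "reduced_word h"
  shows "length h = 0"
proof -
  have "fits_history eta h []"
    using v_labelling.fits_history_computation[OF v_labelling_of_bij[OF assms(1)] assms(2,3,5),
        of "length h"] assms(4)
    by simp
  then show ?thesis
    using fits_history_Nil by fastforce
qed

end
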